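(* Let $R$ be a lattice diagram of a knot or link. Then $R$ is the projection, under the orthogonal projection $\pi_{xy}\colon\mathbb{R}^3\to\mathbb{R}^2$ onto the $xy$-plane, of a proper lattice stick knot or link if and only if $R$ does not have a Celtic configuration.
   Context: The $\mathbb{Z}^3$ lattice is the graph in $\mathbb{R}^3$ whose vertices are the points with integer coordinates and whose edges are the unit-length segments parallel to the coordinate axes; the $\mathbb{Z}^2$ lattice is defined analogously in the plane. An $x$-edge, $y$-edge, $z$-edge is a lattice edge parallel to the corresponding axis. A $z$-stick is a segment that is a union of finitely many $z$-edges; a single lattice point is regarded as a trivial $z$-stick. A lattice stick knot or link is a knot or link contained in the $\mathbb{Z}^3$ lattice. It is proper if: the inverse image under $\pi_{xy}$ of any point of its projection that is not a vertex of the $\mathbb{Z}^2$ lattice is a single point; the inverse image of a vertex of the projection that is not a crossing is a single (possibly trivial) $z$-stick; and the inverse image of a vertex of the projection that is a crossing is two (possibly trivial) disjoint $z$-sticks, the over-strand at the crossing being the one whose $z$-stick lies higher. A lattice diagram of a knot or link is a knot or link diagram (a closed curve or curves in the plane with finitely many transverse double points, the crossings, each with over/under information) that is contained in the $\mathbb{Z}^2$ lattice and all of whose crossings are at vertices of the $\mathbb{Z}^2$ lattice. At a crossing $c$, the $x$-strand (resp. $y$-strand) is the union of the two $x$-edges (resp. $y$-edges) of $R$ having $c$ as an endpoint; $c$ is an $x$-crossing (resp. $y$-crossing) if the over-strand at $c$ is the $x$-strand (resp. $y$-strand); this is the crossing type of $c$. A Celtic configuration is a set of four crossings of $R$ located at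 the four vertices of a unit square of the $\mathbb{Z}^2$ lattice such that any two of them that are endpoints of a common side of the square have opposite crossing types (so diagonally opposite ones have the same type). *)

theory Defs
  imports Main
begin

type_synonym pt2 = "int \<times> int"
type_synonym pt3 = "int \<times> int \<times> int"

text \<open>A lattice edge is encoded by its lower endpoint and its direction:
  the edge (p, D) joins p to p + (unit vector in direction D).\<close>
datatype dir2 = X2 | Y2
datatype dir3 = X3 | Y3 | Z3

type_synonym edge2 = "pt2 \<times> dir2"
type_synonym edge3 = "pt3 \<times> dir3"

fun tip2 :: "edge2 \<Rightarrow> pt2" where
  "tip2 ((x,y), X2) = (x+1, y)"
| "tip2 ((x,y), Y2) = (x, y+1)"

fun tip3 :: "edge3 \<Rightarrow> pt3" where
  "tip3 ((x,y,z), X3) = (x+1, y, z)"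
| "tip3 ((x,y,z), Y3) = (x, y+1, z)"
| "tip3 ((x,y,z), Z3) = (x, y, z+1)"

definition ends2 :: "edge2 \<Rightarrow> pt2 set" where
  "ends2 e = {fst e, tip2 e}"

definition ends3 :: "edge3 \<Rightarrow> pt3 set" where
  "ends3 e = {fst e, tip3 e}"

definition verts2 :: "edge2 set \<Rightarrow> pt2 set" where
  "verts2 E = (\<Union>e\<in>E. ends2 e)"

definition verts3 :: "edge3 set \<Rightarrow> pt3 set" where
  "verts3 L = (\<Union>e\<in>L. ends3 e)"

definition deg2 :: "edge2 set \<Rightarrow> pt2 \<Rightarrow> nat" where
  "deg2 E v = card {e\<in>E. v \<in> ends2 e}"

definition deg3 :: "edge3 set \<Rightarrow> pt3 \<Rightarrow> nat" where
  "deg3 L v = card {e\<in>L. v \<in> ends3 e}"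

text \<open>A lattice diagram R is given by its set E of Z^2-edges (finite, nonempty,
  no edge traversed twice since there are only finitely many double points)
  together with the crossing information ct: at a crossing c, ct c = True means
  c is an x-crossing (over-strand is the x-strand), False means a y-crossing.
  Every vertex of the diagram has degree 2 (ordinary point) or 4 (a crossing,
  where, crossings being transverse, the curve goes straight through along its
  x-strand and its y-strand).\<close>
definition lattice_diagram :: "edge2 set \<Rightarrow> bool" where
  "lattice_diagram E \<longleftrightarrow> finite E \<and> E \<noteq> {} \<and>
     (\<forall>v\<in>verts2 E. deg2 E v = 2 \<or> deg2 E v = 4)"

definition crossing :: "edge2 set \<Rightarrow> pt2 \<Rightarrow> bool" where
  "crossing E v \<longleftrightarrow> v \<in> verts2 E \<and> deg2 E v = 4"

definition celtic_configuration :: "edge2 set \<Rightarrow> (pt2 \<Rightarrow> bool) \<Rightarrow> bool" where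
  "celtic_configuration E ct \<longleftrightarrow> (\<exists>x y.
     crossing E (x,y) \<and> crossing E (x+1,y) \<and> crossing E (x,y+1) \<and> crossing E (x+1,y+1) \<and>
     ct (x,y) \<noteq> ct (x+1,y) \<and> ct (x,y) \<noteq> ct (x,y+1) \<and>
     ct (x+1,y) \<noteq> ct (x+1,y+1) \<and> ct (x,y+1) \<noteq> ct (x+1,y+1))"

text \<open>A lattice stick knot or link: a finite nonempty union of Z^3-edges forming
  disjoint closed curves, i.e. every vertex used has degree exactly 2.\<close>
definition lattice_link :: "edge3 set \<Rightarrow> bool" where
  "lattice_link L \<longleftrightarrow> finite L \<and> L \<noteq> {} \<and> (\<forall>v\<in>verts3 L. deg3 L v = 2)"

fun lift :: "edge2 \<Rightarrow> int \<Rightarrow> edge3" where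
  "lift ((x,y), X2) h = ((x,y,h), X3)"
| "lift ((x,y), Y2) h = ((x,y,h), Y3)"

definition fibV :: "edge3 set \<Rightarrow> pt2 \<Rightarrow> int set" where
  "fibV L v = {z. (fst v, snd v, z) \<in> verts3 L}"

definition fibE :: "edge3 set \<Rightarrow> pt2 \<Rightarrow> int set" where
  "fibE L v = {z. ((fst v, snd v, z), Z3) \<in> L}"

definition is_stick_fibre :: "edge3 set \<Rightarrow> pt2 \<Rightarrow> int \<Rightarrow> int \<Rightarrow> bool" where
  "is_stick_fibre L v a b \<longleftrightarrow> a \<le> b \<and> fibV L v = {a..b} \<and> fibE L v = {a..<b}"

definition is_two_stick_fibre ::
    "edge3 set \<Rightarrow> pt2 \<Rightarrow> int \<Rightarrow> int \<Rightarrow> int \<Rightarrow> int \<Rightarrow> bool" where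
  "is_two_stick_fibre L v a1 b1 a2 b2 \<longleftrightarrow>
     a1 \<le> b1 \<and> b1 < a2 \<and> a2 \<le> b2 \<and>
     fibV L v = {a1..b1} \<union> {a2..b2} \<and> fibE L v = {a1..<b1} \<union> {a2..<b2}"

definition lifted_in :: "edge3 set \<Rightarrow> edge2 \<Rightarrow> int set \<Rightarrow> bool" where
  "lifted_in L e I \<longleftrightarrow> (\<forall>h. lift e h \<in> L \<longrightarrow> h \<in> I)"

definition x_strand_in :: "edge3 set \<Rightarrow> pt2 \<Rightarrow> int set \<Rightarrow> bool" where
  "x_strand_in L c I \<longleftrightarrow>
     lifted_in L ((fst c - 1, snd c), X2) I \<and> lifted_in L ((fst c, snd c), X2) I"

definition y_strand_in :: "edge3 set \<Rightarrow> pt2 \<Rightarrow> int set \<Rightarrow> bool" where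
  "y_strand_in L c I \<longleftrightarrow>
     lifted_in L ((fst c, snd c - 1), Y2) I \<and> lifted_in L ((fst c, snd c), Y2) I"

text \<open>L is a proper lattice stick knot/link whose projection under pi_xy is the
  lattice diagram (E, ct):
  * L is a lattice stick link;
  * every horizontal edge of L lies over an edge of E, and over each edge of E
    there is exactly one edge of L (so pi_xy(L) = |R|, and the inverse image of
    every non-vertex point of the projection is a single point);
  * every vertex of L lies over a vertex of R (z-edges project to vertices of R);
  * over a non-crossing vertex the inverse image is a single z-stick;
  * over a crossing c the inverse image is two disjoint z-sticks, one carrying
    the x-strand and the other the y-strand (so the projection has the
    x-/y-strands of R at c), and the higher stick carries the over-strand of R.\<close>
definition proper_lift :: "edge3 set \<Rightarrow> edge2 set \<Rightarrow> (pt2 \<Rightarrow> bool) \<Rightarrow> bool" where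
  "proper_lift L E ct \<longleftrightarrow>
     lattice_link L \<and>
     (\<forall>e3\<in>L. snd e3 \<noteq> Z3 \<longrightarrow> (\<exists>e\<in>E. \<exists>h. e3 = lift e h)) \<and>
     (\<forall>e\<in>E. \<exists>!h. lift e h \<in> L) \<and>
     (\<forall>x y z. (x,y,z) \<in> verts3 L \<longrightarrow> (x,y) \<in> verts2 E) \<and>
     (\<forall>v\<in>verts2 E. \<not> crossing E v \<longrightarrow> (\<exists>a b. is_stick_fibre L v a b)) \<and>
     (\<forall>c. crossing E c \<longrightarrow> (\<exists>a1 b1 a2 b2. is_two_stick_fibre L c a1 b1 a2 b2 \<and>
        ((ct c \<and> x_strand_in L c {a2..b2} \<and> y_strand_in L c {a1..b1}) \<or>
         (\<not> ct c \<and> y_strand_in L c {a2..b2} \<and> x_strand_in L c {a1..b1}))))"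

end

theory Submission
  imports Defs
begin

(* A proper lift puts the over-strand above the under-strand at every crossing. Around a Celtic
   square each side is the over-strand at one of its endpoints and the under-strand at the other,
   so the heights of the four sides would decrease strictly around a cycle.

   Conversely, follow the relation "e passes over f at some crossing". The crossings visited
   alternate between horizontal and vertical unit steps, and if two consecutive horizontal (or
   vertical) steps went in opposite directions the four crossings involved would form a Celtic
   configuration. Without one, every such walk is a monotone staircase, so its length is bounded
   by the size of the diagram and the relation is acyclic. Lifting each edge to the number of
   edges lying transitively below it, and joining the lifted edges by vertical sticks over the
   vertices, gives a proper lift. *)

definition x_strand :: "pt2 \<Rightarrow> edge2 set" where
  "x_strand v = {((fst v - 1, snd v), X2), ((fst v, snd v), X2)}"

definition y_strand :: "pt2 \<Rightarrow> edge2 set" where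
  "y_strand v = {((fst v, snd v - 1), Y2), ((fst v, snd v), Y2)}"

definition edges_at :: "pt2 \<Rightarrow> edge2 set" where
  "edges_at v = x_strand v \<union> y_strand v"

lemma finite_x_strand [simp]: "finite (x_strand v)"
  and finite_y_strand [simp]: "finite (y_strand v)"
  and finite_edges_at [simp]: "finite (edges_at v)"
  by (simp_all add: x_strand_def y_strand_def edges_at_def)

lemma x_strand_Int_y_strand: "x_strand v \<inter> y_strand v = {}"
  by (auto simp: x_strand_def y_strand_def)

lemma ends2_iff_edges_at: "v \<in> ends2 e \<longleftrightarrow> e \<in> edges_at v"
  by (cases e; cases "fst e"; cases "snd e"; cases v)
     (auto simp: ends2_def edges_at_def x_strand_def y_strand_def)

lemma card_edges_at: "card (edges_at v) = 4"
  by (cases v) (simp add: edges_at_def x_strand_def y_strand_def)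

lemma deg2_eq_card_edges_at: "deg2 E v = card (E \<inter> edges_at v)"
  unfolding deg2_def by (rule arg_cong[where f = card]) (auto simp: ends2_iff_edges_at)

lemma finite_verts2: "finite E \<Longrightarrow> finite (verts2 E)"
  unfolding verts2_def ends2_def by auto

lemma crossing_in_verts2: "crossing E c \<Longrightarrow> c \<in> verts2 E"
  unfolding crossing_def by simp

lemma crossing_edges_at_subset:
  assumes "crossing E v"
  shows "edges_at v \<subseteq> E"
proof -
  have "card (E \<inter> edges_at v) = card (edges_at v)"
    using assms by (simp add: crossing_def deg2_eq_card_edges_at card_edges_at)
  then have "E \<inter> edges_at v = edges_at v"
    by (simp add: card_subset_eq)
  then show ?thesis by blast
qed

lemma non_crossing_two_edges:
  assumes "lattice_diagram E" "v \<in> verts2 E" "\<not> crossing E v"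
  obtains e1 e2 where "e1 \<noteq> e2" "E \<inter> edges_at v = {e1, e2}"
proof -
  have "card (E \<inter> edges_at v) = 2"
    using assms unfolding lattice_diagram_def crossing_def deg2_eq_card_edges_at by auto
  then show ?thesis using that by (meson card_2_iff)
qed

lemma x_strand_in_iff: "x_strand_in L c I \<longleftrightarrow> (\<forall>e\<in>x_strand c. lifted_in L e I)"
  and y_strand_in_iff: "y_strand_in L c I \<longleftrightarrow> (\<forall>e\<in>y_strand c. lifted_in L e I)"
  by (simp_all add: x_strand_in_def y_strand_in_def x_strand_def y_strand_def)

lemma proper_lift_strand_heights:
  assumes "proper_lift L E ct" "crossing E c"
    and "ex \<in> x_strand c" "lift ex hx \<in> L" "ey \<in> y_strand c" "lift ey hy \<in> L"
  shows "if ct c then hy < hx else hx < hy"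
proof -
  obtain a1 b1 a2 b2 where "is_two_stick_fibre L c a1 b1 a2 b2"
    and "(ct c \<and> x_strand_in L c {a2..b2} \<and> y_strand_in L c {a1..b1}) \<or>
         (\<not> ct c \<and> y_strand_in L c {a2..b2} \<and> x_strand_in L c {a1..b1})"
    using assms(1,2) unfolding proper_lift_def by blast
  then show ?thesis
    using assms(3-) unfolding is_two_stick_fibre_def x_strand_in_iff y_strand_in_iff lifted_in_def
    by fastforce
qed

lemma proper_lift_no_celtic_configuration:
  assumes "proper_lift L E ct"
  shows "\<not> celtic_configuration E ct"
proof
  assume "celtic_configuration E ct"
  then obtain x y where
    cr: "crossing E (x, y)" "crossing E (x + 1, y)" "crossing E (x, y + 1)" "crossing E (x + 1, y + 1)" and
    ct: "ct (x, y) \<noteq> ct (x + 1, y)" "ct (x, y) \<noteq> ct (x, y + 1)"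
        "ct (x + 1, y) \<noteq> ct (x + 1, y + 1)" "ct (x, y + 1) \<noteq> ct (x + 1, y + 1)"
    unfolding celtic_configuration_def by blast
  have "((x, y), X2) \<in> E" "((x, y + 1), X2) \<in> E" "((x, y), Y2) \<in> E" "((x + 1, y), Y2) \<in> E"
    using crossing_edges_at_subset[OF cr(1)] crossing_edges_at_subset[OF cr(4)]
    by (auto simp: edges_at_def x_strand_def y_strand_def)
  moreover have "\<And>e. e \<in> E \<Longrightarrow> \<exists>h. lift e h \<in> L"
    using assms unfolding proper_lift_def by blast
  ultimately obtain hB hT hL hR where
    hB: "lift ((x, y), X2) hB \<in> L" and hT: "lift ((x, y + 1), X2) hT \<in> L" and
    hL: "lift ((x, y), Y2) hL \<in> L" and hR: "lift ((x + 1, y), Y2) hR \<in> L"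
    by metis
  have "if ct (x, y) then hL < hB else hB < hL"
    by (rule proper_lift_strand_heights[OF assms cr(1) _ hB _ hL]) (auto simp: x_strand_def y_strand_def)
  moreover have "if ct (x + 1, y) then hR < hB else hB < hR"
    by (rule proper_lift_strand_heights[OF assms cr(2) _ hB _ hR]) (auto simp: x_strand_def y_strand_def)
  moreover have "if ct (x, y + 1) then hL < hT else hT < hL"
    by (rule proper_lift_strand_heights[OF assms cr(3) _ hT _ hL]) (auto simp: x_strand_def y_strand_def)
  moreover have "if ct (x + 1, y + 1) then hR < hT else hT < hR"
    by (rule proper_lift_strand_heights[OF assms cr(4) _ hT _ hR]) (auto simp: x_strand_def y_strand_def)
  ultimately show False using ct by (auto split: if_splits)
qed

definition over_strand :: "(pt2 \<Rightarrow> bool) \<Rightarrow> pt2 \<Rightarrow> edge2 set" where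
  "over_strand ct c = (if ct c then x_strand c else y_strand c)"

definition under_strand :: "(pt2 \<Rightarrow> bool) \<Rightarrow> pt2 \<Rightarrow> edge2 set" where
  "under_strand ct c = (if ct c then y_strand c else x_strand c)"

definition passes_over :: "edge2 set \<Rightarrow> (pt2 \<Rightarrow> bool) \<Rightarrow> (edge2 \<times> edge2) set" where
  "passes_over E ct =
     {(e, f). \<exists>c. crossing E c \<and> e \<in> over_strand ct c \<and> f \<in> under_strand ct c}"

lemma passes_over_subset: "passes_over E ct \<subseteq> E \<times> E"
  using crossing_edges_at_subset
  by (fastforce simp: passes_over_def over_strand_def under_strand_def edges_at_def split: if_splits)

definition stair_step :: "edge2 set \<Rightarrow> (pt2 \<Rightarrow> bool) \<Rightarrow> int \<Rightarrow> int \<Rightarrow> pt2 \<Rightarrow> pt2 \<Rightarrow> bool" where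
  "stair_step E ct sx sy p q \<longleftrightarrow> crossing E p \<and> crossing E q \<and>
     (q = (fst p + sx, snd p) \<and> \<not> ct p \<and> ct q \<or> q = (fst p, snd p + sy) \<and> ct p \<and> \<not> ct q)"

lemma stair_step_displacement:
  assumes "stair_step E ct sx sy p q"
  obtains a b where "0 \<le> a" "0 \<le> b" "a + b = 1" "q = (fst p + a * sx, snd p + b * sy)"
  using assms unfolding stair_step_def
  by (metis add.commute add_0 mult_1 mult_zero_left order_refl zero_less_one_class.zero_le_one)

lemma under_over_stair_step:
  assumes "crossing E c" "f \<in> under_strand ct c" "crossing E c'" "f \<in> over_strand ct c'"
  obtains t where "\<bar>t\<bar> = 1" "stair_step E ct t t c c'"
proof -
  obtain x y x' y' where c: "c = (x, y)" "c' = (x', y')" by fastforce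
  have "c = c' \<or> x' = x + 1 \<and> y' = y \<or> x' = x - 1 \<and> y' = y \<or>
      x' = x \<and> y' = y + 1 \<or> x' = x \<and> y' = y - 1"
    using assms(2,4) by (auto simp: c under_strand_def over_strand_def x_strand_def y_strand_def split: if_splits)
  then have "\<exists>t. \<bar>t\<bar> = 1 \<and> stair_step E ct t t c c'"
    using assms
    by (elim disjE; auto simp: c stair_step_def under_strand_def over_strand_def x_strand_def y_strand_def
          split: if_splits)
  then show ?thesis using that by blast
qed

lemma celtic_configurationI:
  assumes "\<bar>s\<bar> = 1" "\<bar>t\<bar> = 1"
    and "crossing E (x, y)" "crossing E (x + s, y)" "crossing E (x, y + t)" "crossing E (x + s, y + t)"
    and "ct (x, y) = ct (x + s, y + t)" "ct (x + s, y) = ct (x, y + t)" "ct (x, y) \<noteq> ct (x + s, y)"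
  shows "celtic_configuration E ct"
proof -
  have "s = 1 \<or> s = -1" "t = 1 \<or> t = -1" using assms(1,2) by auto
  then show ?thesis
    using assms(3-) unfolding celtic_configuration_def
    by (elim disjE) (rule exI[of _ "min x (x + s)"], rule exI[of _ "min y (y + t)"], simp)+
qed

text \<open>The only use of the absence of a Celtic configuration: reversing direction in
  pp \<rightarrow> p \<rightarrow> c \<rightarrow> c' would close a unit square of crossings.\<close>

lemma stair_step_forced:
  assumes "\<not> celtic_configuration E ct" "\<bar>sx\<bar> = 1" "\<bar>sy\<bar> = 1" "\<bar>t\<bar> = 1"
    and "stair_step E ct sx sy pp p" "stair_step E ct sx sy p c" "stair_step E ct t t c c'"
  shows "stair_step E ct sx sy c c'"
proof -
  obtain x y where pp: "pp = (x, y)" by fastforce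
  have "t = (if ct c then sy else sx)"
  proof (rule ccontr)
    assume "t \<noteq> (if ct c then sy else sx)"
    then have "t = - (if ct c then sy else sx)" using assms(2-4) by auto
    then have "celtic_configuration E ct"
      using assms(5-7) by (intro celtic_configurationI[of sx sy E x y ct])
        (auto simp: pp stair_step_def assms(2,3))
    with assms(1) show False ..
  qed
  then show ?thesis using assms(7) by (auto simp: stair_step_def)
qed

lemma stair_step_turn:
  assumes "stair_step E ct sx sy p q" "stair_step E ct t t q r"
  defines "sx' \<equiv> if ct q then sx else t" and "sy' \<equiv> if ct q then t else sy"
  shows "stair_step E ct sx' sy' p q" "stair_step E ct sx' sy' q r"
  using assms by (auto simp: stair_step_def)

text \<open>e reaches f through crossings c0, \<dots>, c, each step going in the quadrant of (sx, sy),
  so that n is the taxicab distance from c0 to c. The last two steps are remembered because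
  they force the direction of the next one.\<close>

definition staircase :: "edge2 set \<Rightarrow> (pt2 \<Rightarrow> bool) \<Rightarrow> nat \<Rightarrow> edge2 \<Rightarrow> edge2 \<Rightarrow> bool" where
  "staircase E ct n e f \<longleftrightarrow> (\<exists>c0 c sx sy a b.
     crossing E c0 \<and> e \<in> over_strand ct c0 \<and> crossing E c \<and> f \<in> under_strand ct c \<and>
     \<bar>sx\<bar> = 1 \<and> \<bar>sy\<bar> = 1 \<and> 0 \<le> a \<and> 0 \<le> b \<and> a + b = int n \<and>
     c = (fst c0 + a * sx, snd c0 + b * sy) \<and>
     (n = 1 \<longrightarrow> stair_step E ct sx sy c0 c) \<and>
     (2 \<le> n \<longrightarrow> (\<exists>p pp. stair_step E ct sx sy pp p \<and> stair_step E ct sx sy p c)))"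

lemma staircase_SucI:
  assumes "crossing E c0" "e \<in> over_strand ct c0" "crossing E c'" "g \<in> under_strand ct c'"
    and "\<bar>sx\<bar> = 1" "\<bar>sy\<bar> = 1" "0 \<le> a" "0 \<le> b" "a + b = int n"
    and "c = (fst c0 + a * sx, snd c0 + b * sy)" "stair_step E ct sx sy c c'"
    and "n = 0 \<Longrightarrow> c = c0" "1 \<le> n \<Longrightarrow> stair_step E ct sx sy p c"
  shows "staircase E ct (Suc n) e g"
proof -
  obtain da db where d: "0 \<le> da" "0 \<le> db" "da + db = 1" "c' = (fst c + da * sx, snd c + db * sy)"
    using stair_step_displacement[OF assms(11)] .
  have "c' = (fst c0 + (a + da) * sx, snd c0 + (b + db) * sy)"
    using assms(10) d(4) by (simp add: distrib_right)
  moreover have "a + da + (b + db) = int (Suc n)" using assms(9) d(3) by simp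
  moreover have "Suc n = 1 \<longrightarrow> stair_step E ct sx sy c0 c'" using assms(11,12) by auto
  moreover have "2 \<le> Suc n \<longrightarrow> (\<exists>p pp. stair_step E ct sx sy pp p \<and> stair_step E ct sx sy p c')"
    using assms(11,13) by (metis Suc_1 Suc_le_mono)
  ultimately show ?thesis
    unfolding staircase_def using assms(1-8) d(1,2)
    by (intro exI[of _ c0] exI[of _ c'] exI[of _ sx] exI[of _ sy] exI[of _ "a + da"] exI[of _ "b + db"])
      simp
qed

lemma staircase_extend:
  assumes "\<not> celtic_configuration E ct" "staircase E ct n e f" "(f, g) \<in> passes_over E ct"
  shows "staircase E ct (Suc n) e g"
proof -
  obtain c0 c sx sy a b where
    start: "crossing E c0" "e \<in> over_strand ct c0" and
    c: "crossing E c" "f \<in> under_strand ct c" and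
    signs: "\<bar>sx\<bar> = 1" "\<bar>sy\<bar> = 1" and
    ab: "0 \<le> a" "0 \<le> b" "a + b = int n" "c = (fst c0 + a * sx, snd c0 + b * sy)" and
    one: "n = 1 \<longrightarrow> stair_step E ct sx sy c0 c" and
    more: "2 \<le> n \<longrightarrow> (\<exists>p pp. stair_step E ct sx sy pp p \<and> stair_step E ct sx sy p c)"
    using assms(2) unfolding staircase_def by blast
  obtain c' where c': "crossing E c'" "f \<in> over_strand ct c'" "g \<in> under_strand ct c'"
    using assms(3) unfolding passes_over_def by blast
  obtain t where t: "\<bar>t\<bar> = 1" "stair_step E ct t t c c'"
    using under_over_stair_step[OF c c'(1,2)] .
  consider "n = 0" | "n = 1" | "2 \<le> n" by linarith
  then show ?thesis
  proof cases
    case 1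
    then have "a = 0" "b = 0" using ab(1-3) by simp_all
    then have "c = c0" using ab(4) by simp
    with 1 show ?thesis
      using staircase_SucI[OF start c'(1,3) t(1) t(1), of 0 0 n c] t(2) by simp
  next
    case 2
    define sx' where "sx' = (if ct c then sx else t)"
    define sy' where "sy' = (if ct c then t else sy)"
    have steps: "stair_step E ct sx' sy' c0 c" "stair_step E ct sx' sy' c c'"
      using stair_step_turn[OF one[rule_format, OF 2] t(2)] by (simp_all add: sx'_def sy'_def)
    have signs': "\<bar>sx'\<bar> = 1" "\<bar>sy'\<bar> = 1" using signs t by (simp_all add: sx'_def sy'_def)
    obtain a' b' where ab': "0 \<le> a'" "0 \<le> b'" "a' + b' = int n" "c = (fst c0 + a' * sx', snd c0 + b' * sy')"
      using stair_step_displacement[OF steps(1)] 2 by auto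
    show ?thesis
      by (rule staircase_SucI[OF start c'(1,3) signs' ab' steps(2)]) (use 2 steps(1) in simp_all)
  next
    case 3
    then obtain p pp where steps: "stair_step E ct sx sy pp p" "stair_step E ct sx sy p c"
      using more by auto
    have "stair_step E ct sx sy c c'"
      using stair_step_forced[OF assms(1) signs t(1) steps t(2)] .
    then show ?thesis
      by (rule staircase_SucI[OF start c'(1,3) signs ab]) (use 3 steps(2) in auto)
  qed
qed

lemma relpow_passes_over_staircase:
  assumes "\<not> celtic_configuration E ct" "(e, f) \<in> passes_over E ct ^^ Suc n"
  shows "staircase E ct n e f"
  using assms(2)
proof (induction n arbitrary: f)
  case 0
  then obtain c where "crossing E c" "e \<in> over_strand ct c" "f \<in> under_strand ct c"
    by (auto simp: passes_over_def)
  then show ?case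
    unfolding staircase_def by (intro exI[of _ c] exI[of _ 1] exI[of _ 0]) simp
next
  case (Suc n)
  then obtain g where "(e, g) \<in> passes_over E ct ^^ Suc n" "(g, f) \<in> passes_over E ct"
    by (meson relpow_Suc_E)
  with Suc.IH show ?case using staircase_extend[OF assms(1)] by blast
qed

lemma staircase_bounded:
  fixes ct :: "pt2 \<Rightarrow> bool"
  assumes "finite E"
  obtains B where "\<And>n e f. staircase E ct n e f \<Longrightarrow> n \<le> B"
proof -
  define M where "M = Max ((\<lambda>p. \<bar>fst p\<bar> + \<bar>snd p\<bar>) ` verts2 E)"
  have M: "\<bar>fst p\<bar> + \<bar>snd p\<bar> \<le> M" if "crossing E p" for p
    unfolding M_def using that finite_verts2[OF assms] crossing_in_verts2 by simp
  have "n \<le> nat (2 * M)" if st: "staircase E ct n e f" for n e f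
  proof -
    obtain c0 c sx sy a b where "crossing E c0" "crossing E c" "\<bar>sx\<bar> = 1" "\<bar>sy\<bar> = 1"
      "0 \<le> a" "0 \<le> b" "a + b = int n" "c = (fst c0 + a * sx, snd c0 + b * sy)"
      using st unfolding staircase_def by blast
    moreover from this have "\<bar>a * sx\<bar> = a" "\<bar>b * sy\<bar> = b" by (simp_all add: abs_mult)
    ultimately show ?thesis using M[of c0] M[of c] by fastforce
  qed
  then show ?thesis using that by blast
qed

lemma relpow_loop_mult: "(x, x) \<in> R ^^ k \<Longrightarrow> (x, x) \<in> R ^^ (k * m)"
  by (induction m) (auto simp: relpow_trans add.commute)

lemma acyclic_passes_over:
  assumes "finite E" "\<not> celtic_configuration E ct"
  shows "acyclic (passes_over E ct)"
proof -
  obtain B where B: "\<And>n e f. staircase E ct n e f \<Longrightarrow> n \<le> B"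
    using staircase_bounded[OF assms(1), where ct = ct] by blast
  have "(e, e) \<notin> (passes_over E ct)\<^sup>+" for e
  proof
    assume "(e, e) \<in> (passes_over E ct)\<^sup>+"
    then obtain k where k: "0 < k" "(e, e) \<in> passes_over E ct ^^ k"
      by (meson trancl_power)
    have "Suc (k * (B + 2) - 1) = k * (B + 2)" using k(1) by simp
    then have "(e, e) \<in> passes_over E ct ^^ Suc (k * (B + 2) - 1)"
      using relpow_loop_mult[OF k(2), of "B + 2"] by metis
    then have "k * (B + 2) - 1 \<le> B"
      by (intro B relpow_passes_over_staircase[OF assms(2)])
    moreover have "B + 2 \<le> k * (B + 2)" using mult_le_mono1[of 1 k "B + 2"] k(1) by simp
    ultimately show False by linarith
  qed
  then show ?thesis unfolding acyclic_def by blast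
qed

lemma card_trancl_Image_less:
  assumes "finite r" "acyclic r" "(x, y) \<in> r"
  shows "card (r\<^sup>+ `` {y}) < card (r\<^sup>+ `` {x})"
proof (rule psubset_card_mono)
  show "finite (r\<^sup>+ `` {x})" using assms(1) by simp
  have "r\<^sup>+ `` {y} \<subseteq> r\<^sup>+ `` {x}" using assms(3) by (auto intro: trancl_into_trancl2)
  moreover have "y \<in> r\<^sup>+ `` {x}" "y \<notin> r\<^sup>+ `` {y}"
    using assms(2,3) by (auto simp: acyclic_def)
  ultimately show "r\<^sup>+ `` {y} \<subset> r\<^sup>+ `` {x}" by blast
qed

definition separates :: "edge2 set \<Rightarrow> (pt2 \<Rightarrow> bool) \<Rightarrow> (edge2 \<Rightarrow> int) \<Rightarrow> bool" where
  "separates E ct h \<longleftrightarrow> (\<forall>(e, f) \<in> passes_over E ct. h f < h e)"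

definition stack_height :: "edge2 set \<Rightarrow> (pt2 \<Rightarrow> bool) \<Rightarrow> edge2 \<Rightarrow> int" where
  "stack_height E ct e = int (card ((passes_over E ct)\<^sup>+ `` {e}))"

lemma separates_stack_height:
  assumes "finite E" "\<not> celtic_configuration E ct"
  shows "separates E ct (stack_height E ct)"
proof -
  have "finite (passes_over E ct)"
    using passes_over_subset assms(1) by (meson finite_SigmaI finite_subset)
  then show ?thesis
    unfolding separates_def stack_height_def
    using card_trancl_Image_less acyclic_passes_over[OF assms] by auto
qed

definition lowest :: "('a \<Rightarrow> int) \<Rightarrow> 'a set \<Rightarrow> int" where
  "lowest h S = Min (h ` S)"

definition highest :: "('a \<Rightarrow> int) \<Rightarrow> 'a set \<Rightarrow> int" where
  "highest h S = Max (h ` S)"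

lemma lowest_highest_pair [simp]:
  "lowest h {e1, e2} = min (h e1) (h e2)" "highest h {e1, e2} = max (h e1) (h e2)"
  by (simp_all add: lowest_def highest_def)

lemma lowest_le_height: "finite S \<Longrightarrow> e \<in> S \<Longrightarrow> lowest h S \<le> h e"
  and height_le_highest: "finite S \<Longrightarrow> e \<in> S \<Longrightarrow> h e \<le> highest h S"
  by (simp_all add: lowest_def highest_def)

lemma separates_crossing:
  assumes "separates E ct h" "crossing E c"
  shows "highest h (under_strand ct c) < lowest h (over_strand ct c)"
proof -
  have "h f < h e" if "e \<in> over_strand ct c" "f \<in> under_strand ct c" for e f
    using assms that unfolding separates_def passes_over_def by blast
  then show ?thesis
    unfolding highest_def lowest_def
    by (simp add: over_strand_def under_strand_def x_strand_def y_strand_def)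
qed

lemma ends3_lift: "(x, y, z) \<in> ends3 (lift e h) \<longleftrightarrow> z = h \<and> (x, y) \<in> ends2 e"
  by (cases e; cases "fst e"; cases "snd e") (auto simp: ends3_def ends2_def)

lemma ends3_Z3: "(x, y, z) \<in> ends3 ((a, b, c), Z3) \<longleftrightarrow> a = x \<and> b = y \<and> (c = z \<or> c = z - 1)"
  by (auto simp: ends3_def)

lemma lift_eq_iff: "lift e h = lift e' h' \<longleftrightarrow> e = e' \<and> h = h'"
  by (cases e; cases e'; cases "fst e"; cases "fst e'"; cases "snd e"; cases "snd e'") auto

lemma lift_neq_Z3: "lift e h \<noteq> (p, Z3)" "(p, Z3) \<noteq> lift e h"
  by (cases e; cases "fst e"; cases "snd e"; simp)+

text \<open>The pairs of edges through v that are consecutive on the curve.\<close>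

definition strands_at :: "edge2 set \<Rightarrow> pt2 \<Rightarrow> edge2 set set" where
  "strands_at E v = (if crossing E v then {x_strand v, y_strand v} else {E \<inter> edges_at v})"

definition stick_edge :: "edge2 set \<Rightarrow> (edge2 \<Rightarrow> int) \<Rightarrow> pt2 \<Rightarrow> int \<Rightarrow> bool" where
  "stick_edge E h v z \<longleftrightarrow>
     v \<in> verts2 E \<and> (\<exists>S\<in>strands_at E v. lowest h S \<le> z \<and> z < highest h S)"

definition stick_lift :: "edge2 set \<Rightarrow> (edge2 \<Rightarrow> int) \<Rightarrow> edge3 set" where
  "stick_lift E h =
     (\<lambda>e. lift e (h e)) ` E \<union> {((x, y, z), Z3) | x y z. stick_edge E h (x, y) z}"

lemma lift_in_stick_lift_iff: "lift e z \<in> stick_lift E h \<longleftrightarrow> e \<in> E \<and> z = h e"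
  unfolding stick_lift_def using lift_neq_Z3 by (auto simp: lift_eq_iff)

lemma Z3_edge_in_stick_lift_iff: "((x, y, z), Z3) \<in> stick_lift E h \<longleftrightarrow> stick_edge E h (x, y) z"
  unfolding stick_lift_def using lift_neq_Z3 by auto

lemma stick_lift_edges_at_point:
  "{e \<in> stick_lift E h. (x, y, z) \<in> ends3 e} =
     (\<lambda>e. lift e z) ` {e \<in> E \<inter> edges_at (x, y). h e = z} \<union>
     ((if stick_edge E h (x, y) (z - 1) then {((x, y, z - 1), Z3)} else {}) \<union>
      (if stick_edge E h (x, y) z then {((x, y, z), Z3)} else {}))"
  (is "?L = ?R")
proof
  show "?L \<subseteq> ?R"
  proof
    fix e assume e: "e \<in> ?L"
    then consider e' where "e' \<in> E" "e = lift e' (h e')"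
      | a b c where "e = ((a, b, c), Z3)" "stick_edge E h (a, b) c"
      unfolding stick_lift_def by blast
    then show "e \<in> ?R"
    proof cases
      case 1
      then show ?thesis using e by (auto simp: ends3_lift ends2_iff_edges_at)
    next
      case 2
      then show ?thesis using e by (auto simp: ends3_Z3)
    qed
  qed
  show "?R \<subseteq> ?L"
    by (auto simp: ends3_lift ends2_iff_edges_at lift_in_stick_lift_iff Z3_edge_in_stick_lift_iff
          ends3_Z3 split: if_splits)
qed

lemma card_stick_lift_edges_at_point:
  "card {e \<in> stick_lift E h. (x, y, z) \<in> ends3 e} =
     card {e \<in> E \<inter> edges_at (x, y). h e = z} +
     of_bool (stick_edge E h (x, y) (z - 1)) + of_bool (stick_edge E h (x, y) z)"
proof -
  have "inj_on (\<lambda>e. lift e z) {e \<in> E \<inter> edges_at (x, y). h e = z}"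
    by (auto simp: inj_on_def lift_eq_iff)
  then show ?thesis
    unfolding stick_lift_edges_at_point
    by (subst card_Un_disjoint) (auto simp: card_image lift_neq_Z3)
qed

definition stick_degree :: "('a \<Rightarrow> int) \<Rightarrow> 'a set \<Rightarrow> int \<Rightarrow> nat" where
  "stick_degree h S z = card {e \<in> S. h e = z} +
     of_bool (lowest h S \<le> z - 1 \<and> z - 1 < highest h S) + of_bool (lowest h S \<le> z \<and> z < highest h S)"

lemma stick_degree_pair:
  assumes "e1 \<noteq> e2"
  shows "stick_degree h {e1, e2} z =
    (if lowest h {e1, e2} \<le> z \<and> z \<le> highest h {e1, e2} then 2 else 0)"
proof -
  have "{e \<in> {e1, e2}. h e = z} = (if h e1 = z then {e1} else {}) \<union> (if h e2 = z then {e2} else {})"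
    by auto
  then have "card {e \<in> {e1, e2}. h e = z} = of_bool (h e1 = z) + of_bool (h e2 = z)"
    using assms by auto
  then show ?thesis by (auto simp: stick_degree_def min_def max_def)
qed

lemma deg3_stick_lift:
  assumes "lattice_diagram E" "separates E ct h" "(x, y) \<in> verts2 E"
  shows "deg3 (stick_lift E h) (x, y, z) =
    (if \<exists>S\<in>strands_at E (x, y). lowest h S \<le> z \<and> z \<le> highest h S then 2 else 0)"
proof (cases "crossing E (x, y)")
  case False
  then obtain e1 e2 where e: "e1 \<noteq> e2" "E \<inter> edges_at (x, y) = {e1, e2}"
    using non_crossing_two_edges[OF assms(1,3)] by blast
  then have "strands_at E (x, y) = {{e1, e2}}" using False by (simp add: strands_at_def)
  then have "deg3 (stick_lift E h) (x, y, z) = stick_degree h {e1, e2} z"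
    using assms(3)
    by (simp add: deg3_def card_stick_lift_edges_at_point e(2) stick_edge_def stick_degree_def)
  then show ?thesis
    using stick_degree_pair[OF e(1)] \<open>strands_at E (x, y) = _\<close> by simp
next
  case True
  let ?X = "x_strand (x, y)" and ?Y = "y_strand (x, y)"
  have strands: "strands_at E (x, y) = {?X, ?Y}" using True by (simp add: strands_at_def)
  have stick: "stick_edge E h (x, y) t \<longleftrightarrow>
      lowest h ?X \<le> t \<and> t < highest h ?X \<or> lowest h ?Y \<le> t \<and> t < highest h ?Y" for t
    using assms(3) strands by (auto simp: stick_edge_def)
  have "{e \<in> E \<inter> edges_at (x, y). h e = z} = {e \<in> ?X. h e = z} \<union> {e \<in> ?Y. h e = z}"
    using crossing_edges_at_subset[OF True] by (auto simp: edges_at_def)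
  then have card: "card {e \<in> E \<inter> edges_at (x, y). h e = z} =
      card {e \<in> ?X. h e = z} + card {e \<in> ?Y. h e = z}"
    using x_strand_Int_y_strand[of "(x, y)"] by (auto intro: card_Un_disjoint)
  have apart: "highest h ?Y < lowest h ?X \<or> highest h ?X < lowest h ?Y"
    using separates_crossing[OF assms(2) True] by (auto simp: over_strand_def under_strand_def split: if_splits)
  have "deg3 (stick_lift E h) (x, y, z) = stick_degree h ?X z + stick_degree h ?Y z"
    unfolding deg3_def card_stick_lift_edges_at_point stick card stick_degree_def
    using apart by auto
  also have "\<dots> = (if lowest h ?X \<le> z \<and> z \<le> highest h ?X then 2 else 0) +
      (if lowest h ?Y \<le> z \<and> z \<le> highest h ?Y then 2 else 0)"
    using stick_degree_pair[of "((x - 1, y), X2)" "((x, y), X2)" h z]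
      stick_degree_pair[of "((x, y - 1), Y2)" "((x, y), Y2)" h z]
    by (simp add: x_strand_def y_strand_def)
  finally show ?thesis using apart strands by auto
qed

lemma finite_stick_lift:
  assumes "finite E"
  shows "finite (stick_lift E h)"
proof -
  have "{((x, y, z), Z3) | x y z. stick_edge E h (x, y) z} \<subseteq>
    (\<Union>v\<in>verts2 E. \<Union>S\<in>strands_at E v. (\<lambda>z. ((fst v, snd v, z), Z3)) ` {lowest h S..<highest h S})"
    by (force simp: stick_edge_def)
  moreover have "finite (strands_at E v)" for v by (simp add: strands_at_def)
  then have "finite (\<Union>v\<in>verts2 E. \<Union>S\<in>strands_at E v.
      (\<lambda>z. ((fst v, snd v, z), Z3)) ` {lowest h S..<highest h S})"
    using finite_verts2[OF assms] by blast
  ultimately have "finite {((x, y, z), Z3) | x y z. stick_edge E h (x, y) z}"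
    by (rule finite_subset)
  then show ?thesis using assms by (simp add: stick_lift_def)
qed

lemma stick_lift_verts3_proj:
  assumes "(x, y, z) \<in> verts3 (stick_lift E h)"
  shows "(x, y) \<in> verts2 E"
proof -
  obtain e where e: "e \<in> stick_lift E h" "(x, y, z) \<in> ends3 e"
    using assms unfolding verts3_def by auto
  then consider e' where "e' \<in> E" "e = lift e' (h e')"
    | a b c where "e = ((a, b, c), Z3)" "stick_edge E h (a, b) c"
    unfolding stick_lift_def by blast
  then show ?thesis
  proof cases
    case 1
    then show ?thesis using e(2) unfolding verts2_def by (auto simp: ends3_lift)
  next
    case 2
    then show ?thesis using e(2) by (auto simp: ends3_Z3 stick_edge_def)
  qed
qed

lemma verts3_stick_lift_iff:
  assumes "lattice_diagram E" "separates E ct h" "(x, y) \<in> verts2 E"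
  shows "(x, y, z) \<in> verts3 (stick_lift E h) \<longleftrightarrow>
    (\<exists>S\<in>strands_at E (x, y). lowest h S \<le> z \<and> z \<le> highest h S)"
proof -
  have "finite (stick_lift E h)"
    using assms(1) finite_stick_lift by (auto simp: lattice_diagram_def)
  then have "(x, y, z) \<in> verts3 (stick_lift E h) \<longleftrightarrow> deg3 (stick_lift E h) (x, y, z) \<noteq> 0"
    by (auto simp: verts3_def deg3_def)
  then show ?thesis using deg3_stick_lift[OF assms] by simp
qed

lemma lattice_link_stick_lift:
  assumes "lattice_diagram E" "separates E ct h"
  shows "lattice_link (stick_lift E h)"
  unfolding lattice_link_def
proof (intro conjI ballI)
  show "finite (stick_lift E h)" "stick_lift E h \<noteq> {}"
    using assms(1) finite_stick_lift by (auto simp: lattice_diagram_def stick_lift_def)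
  fix p assume p: "p \<in> verts3 (stick_lift E h)"
  obtain x y z where xyz: "p = (x, y, z)" by (cases p) auto
  then have "(x, y) \<in> verts2 E" using p stick_lift_verts3_proj by blast
  then show "deg3 (stick_lift E h) p = 2"
    using p unfolding xyz verts3_stick_lift_iff[OF assms \<open>(x, y) \<in> verts2 E\<close>]
    by (simp add: deg3_stick_lift[OF assms \<open>(x, y) \<in> verts2 E\<close>])
qed

lemma stick_fibre_stick_lift:
  assumes "lattice_diagram E" "separates E ct h" "v \<in> verts2 E" "\<not> crossing E v"
  shows "\<exists>a b. is_stick_fibre (stick_lift E h) v a b"
proof -
  obtain x y where v: "v = (x, y)" by fastforce
  obtain e1 e2 where "e1 \<noteq> e2" "E \<inter> edges_at v = {e1, e2}"
    using non_crossing_two_edges[OF assms(1,3,4)] .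
  then have "strands_at E v = {{e1, e2}}" using assms(4) by (simp add: strands_at_def)
  then have "is_stick_fibre (stick_lift E h) v (lowest h {e1, e2}) (highest h {e1, e2})"
    using verts3_stick_lift_iff[OF assms(1,2), of x y] assms(3)
    by (auto simp: is_stick_fibre_def fibV_def fibE_def v Z3_edge_in_stick_lift_iff stick_edge_def)
  then show ?thesis by blast
qed

lemma strands_at_crossing:
  "crossing E c \<Longrightarrow> strands_at E c = {under_strand ct c, over_strand ct c}"
  by (auto simp: strands_at_def under_strand_def over_strand_def)

lemma lowest_le_highest_strand:
  "lowest h (x_strand c) \<le> highest h (x_strand c)" "lowest h (y_strand c) \<le> highest h (y_strand c)"
  by (simp_all add: x_strand_def y_strand_def)

lemma two_stick_fibre_stick_lift:
  assumes "lattice_diagram E" "separates E ct h" "crossing E c"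
  shows "is_two_stick_fibre (stick_lift E h) c
    (lowest h (under_strand ct c)) (highest h (under_strand ct c))
    (lowest h (over_strand ct c)) (highest h (over_strand ct c))"
proof -
  obtain x y where c: "c = (x, y)" by fastforce
  have v: "(x, y) \<in> verts2 E" using assms(3) crossing_in_verts2 c by blast
  have "lowest h (under_strand ct c) \<le> highest h (under_strand ct c)"
    "lowest h (over_strand ct c) \<le> highest h (over_strand ct c)"
    by (simp_all add: under_strand_def over_strand_def lowest_le_highest_strand)
  then show ?thesis
    using separates_crossing[OF assms(2,3)] strands_at_crossing[OF assms(3), of ct]
      verts3_stick_lift_iff[OF assms(1,2) v] v
    by (auto simp: is_two_stick_fibre_def fibV_def fibE_def c Z3_edge_in_stick_lift_iff stick_edge_def)
qed

lemma lifted_in_stick_lift: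
  "finite S \<Longrightarrow> e \<in> S \<Longrightarrow> lifted_in (stick_lift E h) e {lowest h S..highest h S}"
  by (auto simp: lifted_in_def lift_in_stick_lift_iff lowest_le_height height_le_highest)

lemma proper_lift_stick_lift:
  assumes "lattice_diagram E" "separates E ct h"
  shows "proper_lift (stick_lift E h) E ct"
proof -
  let ?L = "stick_lift E h"
  have strands: "x_strand_in ?L c {lowest h (x_strand c)..highest h (x_strand c)}"
    "y_strand_in ?L c {lowest h (y_strand c)..highest h (y_strand c)}" for c
    by (simp_all add: x_strand_in_iff y_strand_in_iff lifted_in_stick_lift)
  have "\<exists>a1 b1 a2 b2. is_two_stick_fibre ?L c a1 b1 a2 b2 \<and>
      (ct c \<and> x_strand_in ?L c {a2..b2} \<and> y_strand_in ?L c {a1..b1} \<or>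
       \<not> ct c \<and> y_strand_in ?L c {a2..b2} \<and> x_strand_in ?L c {a1..b1})"
    if "crossing E c" for c
    using two_stick_fibre_stick_lift[OF assms that] strands[of c]
    by (cases "ct c"; simp add: over_strand_def under_strand_def; blast)
  moreover have "\<forall>e3\<in>?L. snd e3 \<noteq> Z3 \<longrightarrow> (\<exists>e\<in>E. \<exists>z. e3 = lift e z)"
    by (auto simp: stick_lift_def)
  moreover have "\<forall>e\<in>E. \<exists>!z. lift e z \<in> ?L"
    by (simp add: lift_in_stick_lift_iff)
  ultimately show ?thesis
    unfolding proper_lift_def
    using lattice_link_stick_lift[OF assms] stick_fibre_stick_lift[OF assms] stick_lift_verts3_proj
    by blast
qed

theorem theorem2p4:
  fixes E :: "edge2 set" and ct :: "pt2 \<Rightarrow> bool"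
  assumes "lattice_diagram E"
  shows "(\<exists>L. proper_lift L E ct) \<longleftrightarrow> \<not> celtic_configuration E ct"
proof
  assume "\<exists>L. proper_lift L E ct"
  then show "\<not> celtic_configuration E ct" using proper_lift_no_celtic_configuration by blast
next
  assume "\<not> celtic_configuration E ct"
  moreover have "finite E" using assms by (simp add: lattice_diagram_def)
  ultimately have "separates E ct (stack_height E ct)" by (rule separates_stack_height[rotated])
  then show "\<exists>L. proper_lift L E ct" using proper_lift_stick_lift[OF assms] by blast
qed

end
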